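(* Let $S\subset[0,\infty)$ with $0\in S$, let $C>0$, and let $f\colon S\to[0,\infty)$ be a right-continuous decreasing function with $DP(\overline{f})\subset S$. If $f$ vanishes at infinity, then there exists a sequence $\{F_n\}_{n=0}^\infty$ of finite subsets of $S$ such that $0\in F_n$, $F_n\subset F_{n+1}$, and $\|g^f_{F_n}-f\|<C/2^n$ for all $n\in\mathbb{N}$, where $\|\cdot\|$ is the supremum norm over $S$.
   Context: For $S\subset[0,\infty)$ with $0\in S$, a function on $S$ is right-continuous if it is right-continuous for the relative topology of $S$. For a right-continuous decreasing $f\colon S\to[0,\infty)$ and $x\in\overline{S}$ (closure in $\mathbb{R}$), set $f(x+):=\sup\{f(y)\mid y\in(x,\infty)\cap S\}$ whenever $(x,\infty)\cap S\neq\emptyset$, and $f(x-):=\inf\{f(y)\mid y\in[0,x)\cap S\}$ if $x\neq0$, $f(0-):=f(0)$. Define $\overline{f}\colon\overline{S}\to[0,\infty)$ by $\overline{f}(x)=f(x)$ if $x\in S$, $\overline{f}(x)=f(x+)$ if $x\in\overline{S}\setminus S$ is a right accumulation point of $S$, and $\overline{f}(x)=f(x-)$ otherwise; with $\overline{f}(x-)$ defined by the same formula applied to $\overline{f}$ on $\overline{S}$, let $DP(\overline{f}):=\{x\in\overline{S}\setminus\{0\}\mid\overline{f}(x-)>\overline{f}(x)\}$. $f$ vanishes at infinity if for every $\varepsilon>0$ there is $x\in S$ with $f(y)<\varepsilon$ for all $y\in S$, $y\geq x$. For a finite $F=\{0=x_0<x_1<\cdots<x_m\}\subset S$ and decreasing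 $f$, the step function $g^f_F\colon S\to[0,\infty)$ is $g^f_F:=\sum_{i=1}^m f(x_{i-1})\chi_{[x_{i-1},x_i)\cap S}$, which is $0$ on $[x_m,\infty)\cap S$. *)

theory Defs
  imports "HOL-Analysis.Analysis"
begin

text \<open>Functions on a set S are modelled as total functions real \<Rightarrow> real; only values on S matter.\<close>

definition right_cont_on :: "real set \<Rightarrow> (real \<Rightarrow> real) \<Rightarrow> bool" where
  "right_cont_on S f \<longleftrightarrow> (\<forall>x\<in>S. (f \<longlongrightarrow> f x) (at x within (S \<inter> {x<..})))"

definition decreasing_on :: "real set \<Rightarrow> (real \<Rightarrow> real) \<Rightarrow> bool" where
  "decreasing_on S f \<longleftrightarrow> (\<forall>x\<in>S. \<forall>y\<in>S. x \<le> y \<longrightarrow> f y \<le> f x)"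

text \<open>f(x+) and f(x-) relative to the domain S.\<close>
definition rlim :: "real set \<Rightarrow> (real \<Rightarrow> real) \<Rightarrow> real \<Rightarrow> real" where
  "rlim S f x = Sup (f ` ({x<..} \<inter> S))"

definition llim :: "real set \<Rightarrow> (real \<Rightarrow> real) \<Rightarrow> real \<Rightarrow> real" where
  "llim S f x = (if x = 0 then f 0 else Inf (f ` ({0..<x} \<inter> S)))"

definition right_acc :: "real set \<Rightarrow> real \<Rightarrow> bool" where
  "right_acc S x \<longleftrightarrow> x \<in> closure (S \<inter> {x<..})"

definition fbar :: "real set \<Rightarrow> (real \<Rightarrow> real) \<Rightarrow> real \<Rightarrow> real" where
  "fbar S f x = (if x \<in> S then f x
                 else if right_acc S x then rlim S f x
                 else llim S f x)"

definition DP :: "real set \<Rightarrow> (real \<Rightarrow> real) \<Rightarrow> real set" where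
  "DP T g = {x \<in> T - {0}. llim T g x > g x}"

definition vanishes_at_infinity :: "real set \<Rightarrow> (real \<Rightarrow> real) \<Rightarrow> bool" where
  "vanishes_at_infinity S f \<longleftrightarrow> (\<forall>\<epsilon>>0. \<exists>x\<in>S. \<forall>y\<in>S. y \<ge> x \<longrightarrow> f y < \<epsilon>)"

text \<open>Step function g^f_F = \<Sum>_{i=1}^m f(x_{i-1}) \<chi>_{[x_{i-1},x_i) \<inter> S}, where
  x_0 < ... < x_m enumerate F.\<close>
definition step_fun :: "real set \<Rightarrow> (real \<Rightarrow> real) \<Rightarrow> real set \<Rightarrow> real \<Rightarrow> real" where
  "step_fun S f F y = (let xs = sorted_list_of_set F in
     (\<Sum>i\<in>{1..<length xs}. f (xs ! (i - 1)) * indicator ({xs ! (i - 1)..<xs ! i} \<inter> S) y))"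

definition sup_norm_on :: "real set \<Rightarrow> (real \<Rightarrow> real) \<Rightarrow> real" where
  "sup_norm_on S h = Sup ((\<lambda>y. \<bar>h y\<bar>) ` S)"

end

theory Submission imports Defs begin

text \<open>For a level \<open>c\<close> let \<open>a\<close> be the infimum of the points of \<open>S\<close> where \<open>f \<le> c\<close>.
  Points of \<open>S\<close> not exceeding \<open>a\<close> with \<open>f < c + \<eta>\<close> exist: if \<open>a \<in> S\<close> by right continuity,
  otherwise \<open>a\<close> is a right accumulation point of \<open>S\<close> with \<open>fbar a \<le> c\<close>, and as \<open>a\<close> is not a
  discontinuity point of \<open>fbar\<close>, \<open>fbar\<close> and hence \<open>f\<close> take values below \<open>c + \<eta>\<close> to the left
  of \<open>a\<close>. Such points for the levels \<open>\<eta>, 2\<eta>, \<dots>, K\<eta>\<close>, together with \<open>0\<close> and a point beyond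
  which \<open>f < \<eta>\<close>, give a step function within \<open>2\<eta>\<close> of \<open>f\<close>. Adding points never increases the
  error, so unions of such sets for \<open>\<epsilon> = C / 2^(n+1)\<close> form the required nested sequence.\<close>

lemma decreasing_onD: "decreasing_on S f \<Longrightarrow> x \<in> S \<Longrightarrow> y \<in> S \<Longrightarrow> x \<le> y \<Longrightarrow> f y \<le> f x"
  unfolding decreasing_on_def by blast

lemma sorted_nth_interval_unique:
  assumes "sorted xs" "i < length xs" "j < length xs" "0 < i" "0 < j"
    and "xs ! (i - 1) \<le> y" "y < xs ! i" "xs ! (j - 1) \<le> y" "y < xs ! j"
  shows "i = j"
proof (rule linorder_cases[of i j])
  assume "i < j"
  then have "xs ! i \<le> xs ! (j - 1)" using assms by (intro sorted_nth_mono) auto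
  then show ?thesis using assms by (metis leD order.trans)
next
  assume "j < i"
  then have "xs ! j \<le> xs ! (i - 1)" using assms by (intro sorted_nth_mono) auto
  then show ?thesis using assms by (metis leD order.trans)
qed

lemma Max_filter_le:
  fixes G :: "'a::linorder set"
  assumes "finite G" "x \<in> G" "x \<le> y"
  shows "Max {x\<in>G. x \<le> y} \<in> G" "Max {x\<in>G. x \<le> y} \<le> y" "x \<le> Max {x\<in>G. x \<le> y}"
proof -
  have "Max {x\<in>G. x \<le> y} \<in> {x\<in>G. x \<le> y}" using assms by (intro Max_in) auto
  then show "Max {x\<in>G. x \<le> y} \<in> G" "Max {x\<in>G. x \<le> y} \<le> y" by auto
  show "x \<le> Max {x\<in>G. x \<le> y}" using assms by (intro Max_ge) auto
qed

lemma sorted_list_of_set_interval_index: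
  fixes F :: "'a::linorder set"
  defines "xs \<equiv> sorted_list_of_set F"
  assumes fin: "finite F" and a: "a \<in> F" "a \<le> y" and y: "y < Max F"
  obtains i where "0 < i" "i < length xs" "xs ! (i - 1) = Max {x\<in>F. x \<le> y}" "y < xs ! i"
proof -
  have sorted: "sorted xs" and set_xs: "set xs = F" unfolding xs_def using fin by auto
  have mono: "xs ! i \<le> xs ! j" if "i \<le> j" "j < length xs" for i j
    using sorted that by (simp add: sorted_nth_mono)
  have "Max F \<in> set xs" using fin a set_xs by (metis Max_in empty_iff)
  then have "\<exists>i. i < length xs \<and> y < xs ! i" using y by (metis in_set_conv_nth)
  define i0 where "i0 = (LEAST i. i < length xs \<and> y < xs ! i)"
  have i0: "i0 < length xs" "y < xs ! i0"
    using LeastI_ex[OF \<open>\<exists>i. _\<close>] unfolding i0_def by auto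
  have below: "xs ! i \<le> y" if "i < i0" for i
    using not_less_Least[OF that[unfolded i0_def]] that i0 by (auto simp: i0_def)
  obtain k where "k < length xs" "xs ! k = a" using a set_xs by (metis in_set_conv_nth)
  then have "xs ! 0 \<le> y" using mono[of 0 k] a by simp
  then have "0 < i0" using i0 by (metis gr0I not_le)
  have "xs ! (i0 - 1) = Max {x\<in>F. x \<le> y}"
  proof (rule sym, rule Max_eqI)
    show "xs ! (i0 - 1) \<in> {x\<in>F. x \<le> y}"
      using i0 below \<open>0 < i0\<close> set_xs by (metis (mono_tags) diff_less less_one mem_Collect_eq nth_mem
          order.strict_trans)
    fix x assume "x \<in> {x\<in>F. x \<le> y}"
    then obtain j where j: "j < length xs" "xs ! j = x" "x \<le> y" using set_xs by (auto simp: in_set_conv_nth)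
    then have "j < i0" using mono[of i0 j] i0 by fastforce
    then show "x \<le> xs ! (i0 - 1)" using mono[of j "i0 - 1"] j i0 by simp
  qed (use fin in simp)
  then show ?thesis using that \<open>0 < i0\<close> i0 by blast
qed

lemma step_fun_eq:
  assumes fin: "finite F" and a: "a \<in> F" "a \<le> y" and y: "y \<in> S"
  shows "step_fun S f F y = (if y < Max F then f (Max {x\<in>F. x \<le> y}) else 0)"
proof -
  define xs where "xs = sorted_list_of_set F"
  have step: "step_fun S f F y =
      (\<Sum>i\<in>{1..<length xs}. f (xs ! (i - 1)) * indicator ({xs ! (i - 1)..<xs ! i} \<inter> S) y)"
    unfolding step_fun_def xs_def Let_def ..
  show ?thesis
  proof (cases "y < Max F")
    case False
    have "xs ! i \<le> y" if "i < length xs" for i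
      using that False fin unfolding xs_def by (metis Max_ge nth_mem not_less order_trans set_sorted_list_of_set)
    then have "indicator ({xs ! (i - 1)..<xs ! i} \<inter> S) y = (0::real)" if "i < length xs" for i
      using that by (simp add: indicator_def not_less)
    then have "step_fun S f F y = 0" unfolding step by (intro sum.neutral) simp
    then show ?thesis using False by simp
  next
    case True
    obtain i0 where i0: "0 < i0" "i0 < length xs" "xs ! (i0 - 1) = Max {x\<in>F. x \<le> y}" "y < xs ! i0"
      using sorted_list_of_set_interval_index[OF fin a True] unfolding xs_def by blast
    have i0_le: "xs ! (i0 - 1) \<le> y" using i0(3) Max_filter_le(2)[OF fin a] by simp
    have "step_fun S f F y = (\<Sum>i\<in>{1..<length xs}. if i = i0 then f (xs ! (i0 - 1)) else 0)"
      unfolding step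
    proof (rule sum.cong)
      fix i assume i: "i \<in> {1..<length xs}"
      have "sorted xs" unfolding xs_def by simp
      then have "y \<in> {xs ! (i - 1)..<xs ! i} \<inter> S \<longleftrightarrow> i = i0"
        using sorted_nth_interval_unique[OF _ _ i0(2) _ i0(1) _ _ i0_le i0(4), of i] i i0 i0_le y by auto
      then show "f (xs ! (i - 1)) * indicator ({xs ! (i - 1)..<xs ! i} \<inter> S) y =
          (if i = i0 then f (xs ! (i0 - 1)) else 0)"
        unfolding indicator_def by auto
    qed simp
    also have "\<dots> = f (Max {x\<in>F. x \<le> y})" using i0 by simp
    finally show ?thesis using True by simp
  qed
qed

lemma step_fun_error_leI:
  assumes S: "S \<subseteq> {0..}" and nonneg: "\<forall>x\<in>S. f x \<ge> 0" and dec: "decreasing_on S f"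
    and G: "finite G" "G \<subseteq> S" "0 \<in> G"
    and tail: "f (Max G) \<le> \<epsilon>" and left: "\<forall>y\<in>S. \<exists>x\<in>G. x \<le> y \<and> f x \<le> f y + \<epsilon>"
  shows "\<forall>y\<in>S. \<bar>step_fun S f G y - f y\<bar> \<le> \<epsilon>"
proof
  fix y assume y: "y \<in> S"
  have step: "step_fun S f G y = (if y < Max G then f (Max {x\<in>G. x \<le> y}) else 0)"
    using step_fun_eq[OF G(1,3) _ y] y S by auto
  show "\<bar>step_fun S f G y - f y\<bar> \<le> \<epsilon>"
  proof (cases "y < Max G")
    case True
    obtain x where x: "x \<in> G" "x \<le> y" "f x \<le> f y + \<epsilon>" using left y by blast
    note z = Max_filter_le[OF G(1) x(1,2)]
    have "f (Max {x\<in>G. x \<le> y}) \<le> f x" using decreasing_onD[OF dec] z x G(2) by blast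
    moreover have "f y \<le> f (Max {x\<in>G. x \<le> y})" using decreasing_onD[OF dec] z y G(2) by blast
    ultimately show ?thesis using True step x(3) by simp
  next
    case False
    have "Max G \<in> S" using G Max_in by blast
    then have "f y \<le> f (Max G)" using decreasing_onD[OF dec] y False by simp
    then show ?thesis using False step tail nonneg y by simp
  qed
qed

lemma step_fun_error_leD:
  assumes S: "S \<subseteq> {0..}" and nonneg: "\<forall>x\<in>S. f x \<ge> 0"
    and G: "finite G" "G \<subseteq> S" "0 \<in> G"
    and err: "\<forall>y\<in>S. \<bar>step_fun S f G y - f y\<bar> \<le> \<epsilon>"
  shows "f (Max G) \<le> \<epsilon>" "\<forall>y\<in>S. \<exists>x\<in>G. x \<le> y \<and> f x \<le> f y + \<epsilon>"
proof -
  have Max_G: "Max G \<in> G" "Max G \<in> S" using G Max_in by blast+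
  have step: "step_fun S f G y = (if y < Max G then f (Max {x\<in>G. x \<le> y}) else 0)"
    if "y \<in> S" for y
    using step_fun_eq[OF G(1,3) _ that] that S by auto
  have "\<bar>step_fun S f G (Max G) - f (Max G)\<bar> \<le> \<epsilon>" using err Max_G by blast
  then show tail: "f (Max G) \<le> \<epsilon>" using step[OF Max_G(2)] by simp
  show "\<forall>y\<in>S. \<exists>x\<in>G. x \<le> y \<and> f x \<le> f y + \<epsilon>"
  proof
    fix y assume y: "y \<in> S"
    show "\<exists>x\<in>G. x \<le> y \<and> f x \<le> f y + \<epsilon>"
    proof (cases "y < Max G")
      case True
      define z where "z = Max {x\<in>G. x \<le> y}"
      have "\<bar>f z - f y\<bar> \<le> \<epsilon>" using err y step[OF y] True z_def by fastforce
      then show ?thesis using Max_filter_le[OF G(1,3)] y S z_def by (intro bexI[of _ z]) auto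
    next
      case False
      then show ?thesis using tail nonneg y Max_G by (intro bexI[of _ "Max G"]) auto
    qed
  qed
qed

lemma step_fun_error_le_mono:
  assumes S: "S \<subseteq> {0..}" and nonneg: "\<forall>x\<in>S. f x \<ge> 0" and dec: "decreasing_on S f"
    and G: "finite G" "G \<subseteq> S" "0 \<in> G" and F: "finite F" "G \<subseteq> F" "F \<subseteq> S"
    and err: "\<forall>y\<in>S. \<bar>step_fun S f G y - f y\<bar> \<le> \<epsilon>"
  shows "\<forall>y\<in>S. \<bar>step_fun S f F y - f y\<bar> \<le> \<epsilon>"
proof (rule step_fun_error_leI[OF S nonneg dec F(1,3)])
  show F0: "0 \<in> F" using G F by blast
  note G_err = step_fun_error_leD[OF S nonneg G err]
  have "Max G \<le> Max F" using G F Max_mono by blast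
  then have "f (Max F) \<le> f (Max G)"
    using decreasing_onD[OF dec] G F F0 Max_in by (metis empty_iff subsetD)
  then show "f (Max F) \<le> \<epsilon>" using G_err(1) by simp
  show "\<forall>y\<in>S. \<exists>x\<in>F. x \<le> y \<and> f x \<le> f y + \<epsilon>" using G_err(2) F(2) by blast
qed

lemma rlim_ge:
  assumes S: "S \<subseteq> {0..}" "0 \<in> S" and dec: "decreasing_on S f" and x: "x \<in> S" "w < x"
  shows "f x \<le> rlim S f w"
proof -
  have "bdd_above (f ` ({w<..} \<inter> S))"
    using decreasing_onD[OF dec S(2)] S(1) by (intro bdd_aboveI[of _ "f 0"]) auto
  then show ?thesis unfolding rlim_def using x by (intro cSup_upper) auto
qed

lemma exists_point_less_of_fbar_less:
  assumes S: "S \<subseteq> {0..}" "0 \<in> S" and dec: "decreasing_on S f"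
    and w: "w \<in> closure S" "fbar S f w < t" "w < b"
  shows "\<exists>x\<in>S. x < b \<and> f x < t"
proof (cases "w \<in> S")
  case True
  then show ?thesis using w unfolding fbar_def by auto
next
  case wS: False
  show ?thesis
  proof (cases "right_acc S w")
    case True
    then obtain x where x: "x \<in> S \<inter> {w<..}" "dist x w < b - w"
      using w(3) unfolding right_acc_def closure_approachable by (metis diff_gt_0_iff_gt)
    have "f x \<le> rlim S f w" using rlim_ge[OF S dec] x by blast
    moreover have "rlim S f w < t" using w(2) wS True unfolding fbar_def by simp
    ultimately show ?thesis using x by (intro bexI[of _ x]) (auto simp: dist_real_def)
  next
    case False
    have "closure S \<subseteq> {0..}" using S(1) by (intro closure_minimal) auto
    then have "0 < w" using w(1) wS S(2) by (cases "w = 0") auto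
    then have "Inf (f ` ({0..<w} \<inter> S)) < t" using w(2) wS False unfolding fbar_def llim_def by simp
    moreover have "f ` ({0..<w} \<inter> S) \<noteq> {}" using \<open>0 < w\<close> S(2) by auto
    ultimately have "\<exists>v\<in>f ` ({0..<w} \<inter> S). v < t" by (metis cInf_lessD)
    then obtain x where "x \<in> S" "x < w" "f x < t" by auto
    then show ?thesis using w(3) by (intro bexI[of _ x]) auto
  qed
qed

lemma fbar_le_of_right_approx:
  assumes dec: "decreasing_on S f" and a: "a \<notin> S"
    and approx: "\<And>d. d > 0 \<Longrightarrow> \<exists>y\<in>S. a < y \<and> y < a + d \<and> f y \<le> c"
  shows "right_acc S a" "fbar S f a \<le> c"
proof -
  show racc: "right_acc S a"
    unfolding right_acc_def closure_approachable
  proof (intro allI impI)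
    fix e :: real assume "e > 0"
    then obtain y where "y \<in> S" "a < y" "y < a + e" using approx by blast
    then show "\<exists>y\<in>S \<inter> {a<..}. dist y a < e" by (intro bexI[of _ y]) (auto simp: dist_real_def)
  qed
  have "rlim S f a \<le> c" unfolding rlim_def
  proof (rule cSup_least)
    show "f ` ({a<..} \<inter> S) \<noteq> {}" using approx[of 1] by auto
  next
    fix v assume "v \<in> f ` ({a<..} \<inter> S)"
    then obtain x where x: "x \<in> S" "a < x" "v = f x" by auto
    obtain y where "y \<in> S" "a < y" "y < x" "f y \<le> c" using approx[of "x - a"] x by auto
    then show "v \<le> c" using decreasing_onD[OF dec, of y x] x by simp
  qed
  then show "fbar S f a \<le> c" using a racc unfolding fbar_def by simp
qed

lemma right_cont_on_sublevel_le:
  assumes rc: "right_cont_on S f" and a: "a \<in> S"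
    and approx: "\<And>d. d > 0 \<Longrightarrow> \<exists>y\<in>S. a \<le> y \<and> y < a + d \<and> f y \<le> c"
  shows "f a \<le> c"
proof (rule ccontr)
  assume "\<not> f a \<le> c"
  then have "f a - c > 0" by simp
  moreover have "(f \<longlongrightarrow> f a) (at a within (S \<inter> {a<..}))" using rc a unfolding right_cont_on_def by blast
  ultimately obtain d where d: "d > 0"
      "\<forall>x\<in>S \<inter> {a<..}. 0 < dist x a \<and> dist x a < d \<longrightarrow> dist (f x) (f a) < f a - c"
    unfolding Lim_within by blast
  obtain y where y: "y \<in> S" "a \<le> y" "y < a + d" "f y \<le> c" using approx d(1) by blast
  then have "a < y" using \<open>\<not> f a \<le> c\<close> by (cases "y = a") auto
  then have "\<bar>f y - f a\<bar> < f a - c" using d y by (auto simp: dist_real_def)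
  then show False using y(4) by linarith
qed

lemma exists_point_less_of_right_approx:
  assumes S: "S \<subseteq> {0..}" "0 \<in> S" and dec: "decreasing_on S f"
    and dp: "DP (closure S) (fbar S f) \<subseteq> S" and a: "a \<notin> S" and \<eta>: "\<eta> > 0"
    and approx: "\<And>d. d > 0 \<Longrightarrow> \<exists>y\<in>S. a < y \<and> y < a + d \<and> f y \<le> c"
  shows "\<exists>x\<in>S. x < a \<and> f x < c + \<eta>"
proof -
  note a_props = fbar_le_of_right_approx[OF dec a approx]
  have a_cl: "a \<in> closure S" using a_props(1) closure_mono unfolding right_acc_def by blast
  have "0 \<le> a" using a_cl closure_minimal[OF S(1)] by auto
  have "a \<noteq> 0" using a S(2) by blast
  have "a \<notin> DP (closure S) (fbar S f)" using dp a by blast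
  then have "\<not> fbar S f a < llim (closure S) (fbar S f) a" using a_cl \<open>a \<noteq> 0\<close> unfolding DP_def by blast
  then have "Inf (fbar S f ` ({0..<a} \<inter> closure S)) < c + \<eta>"
    using a_props(2) \<open>a \<noteq> 0\<close> \<eta> unfolding llim_def by simp
  moreover have "0 \<in> {0..<a} \<inter> closure S" using \<open>0 \<le> a\<close> \<open>a \<noteq> 0\<close> S(2) closure_subset by auto
  then have "fbar S f ` ({0..<a} \<inter> closure S) \<noteq> {}" by blast
  ultimately have "\<exists>v\<in>fbar S f ` ({0..<a} \<inter> closure S). v < c + \<eta>" by (metis cInf_lessD)
  then obtain w where "w \<in> closure S" "w < a" "fbar S f w < c + \<eta>" by auto
  then show ?thesis using exists_point_less_of_fbar_less[OF S dec] by blast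
qed

lemma exists_point_before_sublevel:
  assumes S: "S \<subseteq> {0..}" "0 \<in> S" and rc: "right_cont_on S f" and dec: "decreasing_on S f"
    and dp: "DP (closure S) (fbar S f) \<subseteq> S"
    and z: "z \<in> S" "f z \<le> c" and \<eta>: "\<eta> > 0"
  shows "\<exists>p\<in>S. f p < c + \<eta> \<and> (\<forall>y\<in>S. f y \<le> c \<longrightarrow> p \<le> y)"
proof -
  define A where "A = {y\<in>S. f y \<le> c}"
  define a where "a = Inf A"
  have A: "A \<noteq> {}" "bdd_below A" unfolding A_def using z S(1) by (auto intro!: bdd_belowI)
  have a_le: "a \<le> y" if "y \<in> S" "f y \<le> c" for y
    unfolding a_def A_def using A that by (intro cInf_lower) (auto simp: A_def)
  have approx: "\<exists>y\<in>S. a \<le> y \<and> y < a + d \<and> f y \<le> c" if "d > 0" for d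
  proof -
    obtain y where "y \<in> A" "y < a + d" using cInf_lessD[OF A(1), of "a + d"] \<open>d > 0\<close> unfolding a_def by auto
    then show ?thesis using a_le unfolding A_def by force
  qed
  have "\<exists>p\<in>S. f p < c + \<eta> \<and> p \<le> a"
  proof (cases "a \<in> S")
    case True
    have "f a < c + \<eta>" using right_cont_on_sublevel_le[OF rc True approx] \<eta> by simp
    then show ?thesis using True by blast
  next
    case False
    have "\<exists>y\<in>S. a < y \<and> y < a + d \<and> f y \<le> c" if "d > 0" for d
    proof -
      obtain y where y: "y \<in> S" "a \<le> y" "y < a + d" "f y \<le> c" using approx \<open>d > 0\<close> by blast
      then have "a \<noteq> y" using False by blast
      then show ?thesis using y by force
    qed
    then obtain x where "x \<in> S" "x < a" "f x < c + \<eta>"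
      using exists_point_less_of_right_approx[OF S dec dp False \<eta>] by blast
    then show ?thesis by (intro bexI[of _ x]) auto
  qed
  then obtain p where "p \<in> S" "f p < c + \<eta>" "p \<le> a" by blast
  then show ?thesis using a_le by (intro bexI[of _ p]) force+
qed

lemma exists_nat_multiple_bracket:
  fixes t \<eta> :: real
  assumes "0 \<le> t" "t < real K * \<eta>" "0 < \<eta>"
  obtains j :: nat where "j \<in> {1..K}" "t < real j * \<eta>" "real j * \<eta> \<le> t + \<eta>"
proof
  define j where "j = nat \<lfloor>t / \<eta>\<rfloor> + 1"
  have "real j = of_int \<lfloor>t / \<eta>\<rfloor> + 1" unfolding j_def using assms by simp
  then have "t / \<eta> < real j" "real j \<le> t / \<eta> + 1" by linarith+
  then show upper: "t < real j * \<eta>" and lower: "real j * \<eta> \<le> t + \<eta>"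
    using assms by (simp_all add: field_simps)
  have "(real j - 1) * \<eta> < real K * \<eta>" using lower assms(2) by (simp add: algebra_simps)
  then have "real j - 1 < real K" using assms(3) by (meson mult_less_cancel_right_pos)
  then show "j \<in> {1..K}" unfolding j_def by simp
qed

lemma exists_step_fun_approx:
  assumes S: "S \<subseteq> {0..}" "0 \<in> S" and nonneg: "\<forall>x\<in>S. f x \<ge> 0"
    and rc: "right_cont_on S f" and dec: "decreasing_on S f" and dp: "DP (closure S) (fbar S f) \<subseteq> S"
    and van: "vanishes_at_infinity S f" and \<epsilon>: "\<epsilon> > 0"
  shows "\<exists>G. finite G \<and> G \<subseteq> S \<and> 0 \<in> G \<and> (\<forall>y\<in>S. \<bar>step_fun S f G y - f y\<bar> \<le> \<epsilon>)"
proof -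
  define \<eta> where "\<eta> = \<epsilon> / 2"
  have \<eta>: "\<eta> > 0" using \<epsilon> unfolding \<eta>_def by simp
  obtain M where M: "M \<in> S" "\<forall>y\<in>S. M \<le> y \<longrightarrow> f y < \<eta>"
    using van \<eta> unfolding vanishes_at_infinity_def by blast
  obtain K :: nat where K: "f 0 < real K * \<eta>" using reals_Archimedean3[OF \<eta>] by blast
  have "\<forall>k\<in>{1..K}. \<exists>q. q \<in> S \<and> f q < real k * \<eta> + \<eta> \<and> (\<forall>y\<in>S. f y \<le> real k * \<eta> \<longrightarrow> q \<le> y)"
  proof
    fix k assume "k \<in> {1..K}"
    then have "\<eta> \<le> real k * \<eta>" using \<eta> by simp
    moreover have "f M < \<eta>" using M by blast
    ultimately have "f M \<le> real k * \<eta>" by linarith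
    then show "\<exists>q. q \<in> S \<and> f q < real k * \<eta> + \<eta> \<and> (\<forall>y\<in>S. f y \<le> real k * \<eta> \<longrightarrow> q \<le> y)"
      using exists_point_before_sublevel[OF S rc dec dp M(1) _ \<eta>] by blast
  qed
  then obtain p where p: "\<forall>k\<in>{1..K}.
      p k \<in> S \<and> f (p k) < real k * \<eta> + \<eta> \<and> (\<forall>y\<in>S. f y \<le> real k * \<eta> \<longrightarrow> p k \<le> y)"
    by (rule bchoice[THEN exE])
  define G where "G = insert 0 (insert M (p ` {1..K}))"
  have G: "finite G" "G \<subseteq> S" "0 \<in> G" unfolding G_def using S M p by auto
  have "M \<le> Max G" using G(1) by (rule Max_ge) (simp add: G_def)
  moreover have "Max G \<in> S" using G Max_in by blast
  ultimately have "f (Max G) \<le> \<epsilon>" using M(2) \<eta>_def \<eta> by fastforce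
  moreover have "\<exists>x\<in>G. x \<le> y \<and> f x \<le> f y + \<epsilon>" if y: "y \<in> S" for y
  proof -
    have "f y \<le> f 0" using decreasing_onD[OF dec S(2) y] y S(1) by auto
    then have "f y < real K * \<eta>" using K by linarith
    moreover have "0 \<le> f y" using nonneg y by blast
    ultimately obtain j where j: "j \<in> {1..K}" "f y < real j * \<eta>" "real j * \<eta> \<le> f y + \<eta>"
      using exists_nat_multiple_bracket[OF _ _ \<eta>] by blast
    then have pj: "p j \<in> S" "f (p j) < real j * \<eta> + \<eta>" "\<forall>y\<in>S. f y \<le> real j * \<eta> \<longrightarrow> p j \<le> y"
      using p by blast+
    have "p j \<in> G" using j(1) by (simp add: G_def)
    moreover have "p j \<le> y" using pj(3) y j(2) by simp
    moreover have "f (p j) \<le> f y + \<epsilon>" using pj(2) j(3) \<eta>_def by simp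
    ultimately show ?thesis by blast
  qed
  ultimately have "\<forall>y\<in>S. \<bar>step_fun S f G y - f y\<bar> \<le> \<epsilon>"
    using step_fun_error_leI[OF S(1) nonneg dec G] by blast
  then show ?thesis using G by blast
qed

lemma sup_norm_on_le:
  assumes "S \<noteq> {}" "\<forall>y\<in>S. \<bar>h y\<bar> \<le> \<epsilon>"
  shows "sup_norm_on S h \<le> \<epsilon>"
  unfolding sup_norm_on_def using assms by (intro cSup_least) auto

theorem lemma2p6:
  fixes S :: "real set" and C :: real and f :: "real \<Rightarrow> real"
  assumes "S \<subseteq> {0..}" and "0 \<in> S" and "C > 0"
    and "\<forall>x\<in>S. f x \<ge> 0"
    and "right_cont_on S f" and "decreasing_on S f"
    and "DP (closure S) (fbar S f) \<subseteq> S"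
    and "vanishes_at_infinity S f"
  shows "\<exists>F :: nat \<Rightarrow> real set. \<forall>n.
           finite (F n) \<and> F n \<subseteq> S \<and> 0 \<in> F n \<and> F n \<subseteq> F (Suc n) \<and>
           sup_norm_on S (\<lambda>y. step_fun S f (F n) y - f y) < C / 2 ^ n"
proof -
  have "\<forall>n. \<exists>G. finite G \<and> G \<subseteq> S \<and> 0 \<in> G \<and> (\<forall>y\<in>S. \<bar>step_fun S f G y - f y\<bar> \<le> C / 2 ^ n / 2)"
    using exists_step_fun_approx[OF assms(1,2,4-8)] assms(3) by simp
  then obtain G where "\<forall>n. finite (G n) \<and> G n \<subseteq> S \<and> 0 \<in> G n \<and>
      (\<forall>y\<in>S. \<bar>step_fun S f (G n) y - f y\<bar> \<le> C / 2 ^ n / 2)"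
    by (metis choice)
  then have G: "finite (G n)" "G n \<subseteq> S" "0 \<in> G n"
    and err: "\<forall>y\<in>S. \<bar>step_fun S f (G n) y - f y\<bar> \<le> C / 2 ^ n / 2" for n
    by blast+
  define F where "F n = (\<Union>k\<le>n. G k)" for n
  have F: "finite (F n)" "F n \<subseteq> S" "0 \<in> F n" "F n \<subseteq> F (Suc n)" "G n \<subseteq> F n" for n
    unfolding F_def using G by (auto simp: atMost_Suc)
  have "sup_norm_on S (\<lambda>y. step_fun S f (F n) y - f y) < C / 2 ^ n" for n
  proof -
    have "\<forall>y\<in>S. \<bar>step_fun S f (F n) y - f y\<bar> \<le> C / 2 ^ n / 2"
      using step_fun_error_le_mono[OF assms(1,4,6) G F(1,5,2) err] .
    then have "sup_norm_on S (\<lambda>y. step_fun S f (F n) y - f y) \<le> C / 2 ^ n / 2"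
      using assms(2) by (intro sup_norm_on_le) auto
    also have "\<dots> < C / 2 ^ n" using assms(3) by (simp add: field_simps)
    finally show ?thesis .
  qed
  then show ?thesis using F by (intro exI[of _ F]) simp
qed

end
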